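(* Let $f:\mathbb{R}^d\to\mathbb{R}$ be convex and differentiable with $L$-Lipschitz gradient ($\|\nabla f(x)-\nabla f(y)\|\le L\|x-y\|$ for all $x,y$), and suppose $X^*\neq\emptyset$. Run the Proximal Bundle Method with parameter $\beta\in(0,1)$ and constant stepsize $\rho_k=\rho>0$. Let $D^2=\sup_k\mathrm{dist}(x_k,X^* )^2$ and assume $0<D^2<\infty$. Then for any $0<\epsilon\le f(x_0)-f^*$, the number of descent steps taken before an $\epsilon$-minimizer is found is at most $$N:=\frac{2\rho D^2}{\beta\epsilon}+\left\lceil\frac{2\log\left(\frac{f(x_0)-f^*}{\rho D^2}\right)}{\beta}\right\rceil_+,$$ and the number of null steps taken before then is at most $$\frac{16(L+\rho)^3}{(1-\beta)^2\rho^3}\left(N+1\right).$$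
   Context: Throughout, $f:\mathbb{R}^d\to\mathbb{R}$ is a proper closed convex function attaining its minimum $f^*=\inf f$ on the nonempty set $X^*=\{x: f(x)=f^*\}$; $\mathrm{dist}(x,S)=\inf_{y\in S}\|x-y\|$; $\partial f(x)$ is the convex subdifferential; $\lceil a\rceil_+=\max\{\lceil a\rceil,0\}$. A subgradient oracle returns, for any $x$, the value $f(x)$ and some $g(x)\in\partial f(x)$. Proximal Bundle Method: fix $\beta\in(0,1)$, $x_0=z_0\in\mathbb{R}^d$, $g_0=g(x_0)$, and the initial model $f_0(x)=f(x_0)+\langle g_0,x-x_0\rangle$. At iteration $k\ge0$, given a convex model $f_k:\mathbb{R}^d\to\mathbb{R}$ and stepsize $\rho_k>0$, compute $z_{k+1}=\operatorname{argmin}_z f_k(z)+\frac{\rho_k}{2}\|z-x_k\|^2$. If $\beta(f(x_k)-f_k(z_{k+1}))\le f(x_k)-f(z_{k+1})$, iteration $k$ is a descent step and $x_{k+1}=z_{k+1}$; otherwise it is a null step and $x_{k+1}=x_k$. Then a new convex model $f_{k+1}$ and stepsize $\rho_{k+1}$ are chosen satisfying, with $g_{k+1}=g(z_{k+1})$ and $s_{k+1}=\rho_k(x_k-z_{k+1})$: (1) $f_{k+1}(x)\le f(x)$ for all $x$; (2) $f_{k+1}(x)\ge f(z_{k+1})+\langle g_{k+1},x-z_{k+1}\rangle$ for all $x$; (3) if iteration $k$ was a null step, $f_{k+1}(x)\ge f_k(z_{k+1})+\langle s_{k+1},x-z_{k+1}\rangle$ for all $x$; (4) if iteration $k$ was a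 null step, $\rho_{k+1}\ge\rho_k$. An $\epsilon$-minimizer is a point $x$ with $f(x)-f^*\le\epsilon$. *)

theory Defs
  imports "HOL-Analysis.Analysis"
begin

definition subdiff :: "('a::real_inner \<Rightarrow> real) \<Rightarrow> 'a \<Rightarrow> 'a set" where
  "subdiff f x = {g. \<forall>y. f y \<ge> f x + inner g (y - x)}"

definition ceil_plus :: "real \<Rightarrow> int" where
  "ceil_plus a = max (ceiling a) 0"

definition pbm_descent :: "('a \<Rightarrow> real) \<Rightarrow> real \<Rightarrow> (nat \<Rightarrow> 'a) \<Rightarrow> (nat \<Rightarrow> 'a)
    \<Rightarrow> (nat \<Rightarrow> 'a \<Rightarrow> real) \<Rightarrow> nat \<Rightarrow> bool" where
  "pbm_descent f \<beta> x z fm k \<longleftrightarrow>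
     \<beta> * (f (x k) - fm k (z (Suc k))) \<le> f (x k) - f (z (Suc k))"

definition is_pbm_run :: "('a::real_inner \<Rightarrow> real) \<Rightarrow> ('a \<Rightarrow> 'a) \<Rightarrow> real \<Rightarrow> real
    \<Rightarrow> (nat \<Rightarrow> 'a) \<Rightarrow> (nat \<Rightarrow> 'a) \<Rightarrow> (nat \<Rightarrow> 'a \<Rightarrow> real) \<Rightarrow> bool" where
  "is_pbm_run f g \<beta> \<rho> x z fm \<longleftrightarrow>
     z 0 = x 0 \<and>
     fm 0 = (\<lambda>y. f (x 0) + inner (g (x 0)) (y - x 0)) \<and>
     (\<forall>k. convex_on UNIV (fm k)) \<and>
     (\<forall>k. \<forall>y. fm k (z (Suc k)) + \<rho> / 2 * (norm (z (Suc k) - x k))\<^sup>2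
                 \<le> fm k y + \<rho> / 2 * (norm (y - x k))\<^sup>2) \<and>
     (\<forall>k. x (Suc k) = (if pbm_descent f \<beta> x z fm k then z (Suc k) else x k)) \<and>
     (\<forall>k y. fm (Suc k) y \<le> f y) \<and>
     (\<forall>k y. fm (Suc k) y \<ge> f (z (Suc k)) + inner (g (z (Suc k))) (y - z (Suc k))) \<and>
     (\<forall>k y. \<not> pbm_descent f \<beta> x z fm k \<longrightarrow>
        fm (Suc k) y \<ge> fm k (z (Suc k)) + inner (\<rho> *\<^sub>R (x k - z (Suc k))) (y - z (Suc k)))"

end

theory Submission
  imports Defs
begin

text \<open>Descent steps: the proximal step compares favourably with every point of the segment from
  x_k to a nearest minimizer, so each descent step shrinks the optimality gap a_k by the factor
  1 - \<beta>/2 while a_k > \<rho> D^2 (at most the logarithmic term many steps), and afterwards by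
  \<beta> a_k^2 / (2 \<rho> D^2), which makes 1/a_k grow linearly (at most 2 \<rho> D^2 / (\<beta> \<epsilon>) steps).
  Null steps: during a run of null steps at a fixed centre X, the value of the proximal subproblem
  rises by a fixed fraction of its gap to f(X); that gap stays at least |\<nabla>f(X)|^2 / (2(2L + \<rho>)),
  while right after the descent step that produced X it is at most |\<nabla>f(X)|^2 / (2\<rho>). Hence
  every run of null steps has length at most 4L(\<rho> + 4L) / ((1 - \<beta>) \<rho>^2), and there is one
  run per descent step plus the initial one.\<close>

lemma lipschitz_gradient_upper_bound:
  fixes f :: "'a::real_inner \<Rightarrow> real" and grad :: "'a \<Rightarrow> 'a"
  assumes grad: "\<forall>y. (f has_derivative (\<lambda>h. inner (grad y) h)) (at y)"
    and lip: "\<forall>u v. norm (grad u - grad v) \<le> L * norm (u - v)"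
    and L: "L \<ge> 0"
  shows "f y \<le> f z + inner (grad z) (y - z) + L * (norm (y - z))\<^sup>2"
proof -
  define d where "d = y - z"
  define \<psi> where "\<psi> t = f (z + t *\<^sub>R d) - t * inner (grad z) d" for t
  have der: "(\<psi> has_derivative (\<lambda>h. inner (grad (z + t *\<^sub>R d)) (h *\<^sub>R d) - h * inner (grad z) d)) (at t)"
    for t
  proof -
    have "((\<lambda>t. z + t *\<^sub>R d) has_derivative (\<lambda>h. h *\<^sub>R d)) (at t)"
      by (auto intro!: derivative_eq_intros)
    from has_derivative_compose[OF this grad[rule_format, of "z + t *\<^sub>R d"]]
    have "((\<lambda>t. f (z + t *\<^sub>R d)) has_derivative (\<lambda>h. inner (grad (z + t *\<^sub>R d)) (h *\<^sub>R d))) (at t)"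
      by (simp add: o_def)
    then show ?thesis unfolding \<psi>_def
      by (rule has_derivative_diff) (auto intro!: derivative_eq_intros)
  qed
  have "continuous_on {0..1} \<psi>"
    using der by (meson has_derivative_continuous continuous_at_imp_continuous_on)
  then obtain t where t: "t \<in> {0<..<1}"
    and mvt: "norm (\<psi> 1 - \<psi> 0) \<le> norm (inner (grad (z + t *\<^sub>R d)) ((1-0) *\<^sub>R d) - (1-0) * inner (grad z) d)"
    using mvt_general[of 0 1 \<psi>, OF _ _ der] by auto
  have "norm (inner (grad (z + t *\<^sub>R d)) ((1-0) *\<^sub>R d) - (1-0) * inner (grad z) d)
      = \<bar>inner (grad (z + t *\<^sub>R d) - grad z) d\<bar>"
    by (simp add: inner_diff_left)
  also have "\<dots> \<le> norm (grad (z + t *\<^sub>R d) - grad z) * norm d"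
    by (rule Cauchy_Schwarz_ineq2)
  also have "\<dots> \<le> L * norm (t *\<^sub>R d) * norm d"
    using lip[rule_format, of "z + t *\<^sub>R d" z] by (intro mult_right_mono) simp_all
  also have "\<dots> \<le> L * norm d * norm d"
    using t L by (intro mult_right_mono mult_left_mono) (simp_all add: mult_left_le_one_le)
  finally have "\<psi> 1 - \<psi> 0 \<le> L * (norm d)\<^sup>2"
    using mvt by (simp add: power2_eq_square)
  then show ?thesis unfolding \<psi>_def d_def by simp
qed

lemma power2_norm_add_scaleR:
  fixes a b :: "'a::real_inner"
  shows "(norm (a + t *\<^sub>R b))\<^sup>2 = (norm a)\<^sup>2 + 2 * t * inner a b + t\<^sup>2 * (norm b)\<^sup>2"
  unfolding power2_norm_eq_inner
  by (simp add: inner_add_left inner_add_right inner_commute power2_eq_square algebra_simps)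

lemma inner_add_quadratic_ge:
  fixes w d :: "'a::real_inner"
  assumes "\<rho> > 0"
  shows "inner w d + \<rho> / 2 * (norm d)\<^sup>2 \<ge> - ((norm w)\<^sup>2 / (2 * \<rho>))"
proof -
  have "0 \<le> (norm (w + \<rho> *\<^sub>R d))\<^sup>2" by simp
  also have "\<dots> = (norm w)\<^sup>2 + 2 * \<rho> * inner w d + \<rho>\<^sup>2 * (norm d)\<^sup>2"
    by (rule power2_norm_add_scaleR)
  finally show ?thesis
    using assms by (simp add: field_simps power2_eq_square)
qed

lemma norm_le_of_inner_le_quadratic:
  fixes v :: "'a::real_inner"
  assumes le: "\<And>d. inner v d \<le> e + L * (norm d)\<^sup>2" and L: "L \<ge> 0"
  shows "(norm v)\<^sup>2 \<le> 4 * L * e"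
proof (cases "L > 0")
  case True
  define d where "d = (1 / (2 * L)) *\<^sub>R v"
  have "inner v d = (norm v)\<^sup>2 / (2 * L)"
    by (simp add: d_def power2_norm_eq_inner)
  moreover have "L * (norm d)\<^sup>2 = (norm v)\<^sup>2 / (4 * L)"
    using True by (simp add: d_def power2_eq_square field_simps)
  ultimately have "(norm v)\<^sup>2 / (2 * L) \<le> e + (norm v)\<^sup>2 / (4 * L)"
    using le by metis
  then show ?thesis
    using True by (simp add: field_simps)
next
  case False
  with L have "L = 0" by simp
  show ?thesis
  proof (rule ccontr)
    assume "\<not> ?thesis"
    with \<open>L = 0\<close> have "(norm v)\<^sup>2 > 0" by simp
    then have "inner v (((e + 1) / (norm v)\<^sup>2) *\<^sub>R v) = e + 1"
      by (simp add: power2_norm_eq_inner)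
    then show False
      using le \<open>L = 0\<close> by (metis add.right_neutral less_add_one mult_zero_left not_le)
  qed
qed

lemma prox_point_optimality:
  fixes h :: "'a::real_inner \<Rightarrow> real"
  assumes cvx: "convex_on UNIV h"
    and opt: "\<forall>y. h z + \<rho> / 2 * (norm (z - x))\<^sup>2 \<le> h y + \<rho> / 2 * (norm (y - x))\<^sup>2"
    and \<rho>: "\<rho> > 0"
  shows "h y \<ge> h z + inner (\<rho> *\<^sub>R (x - z)) (y - z)"
proof -
  define A where "A = h z - h y - \<rho> * inner (z - x) (y - z)"
  define B where "B = \<rho> / 2 * (norm (y - z))\<^sup>2"
  have "B \<ge> 0" using \<rho> by (simp add: B_def)
  txt \<open>Compare z with the point (1 - t) z + t y of the segment and let t tend to 0.\<close>
  have A_le: "A \<le> t * B" if t: "0 < t" "t \<le> 1" for t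
  proof -
    define w where "w = (1 - t) *\<^sub>R z + t *\<^sub>R y"
    have hw: "h w \<le> (1 - t) * h z + t * h y"
      unfolding w_def using convex_onD[OF cvx, of t z y] t by simp
    have wx: "w - x = (z - x) + t *\<^sub>R (y - z)" by (simp add: w_def algebra_simps)
    have nw: "(norm (w - x))\<^sup>2
        = (norm (z - x))\<^sup>2 + 2 * t * inner (z - x) (y - z) + t\<^sup>2 * (norm (y - z))\<^sup>2"
      unfolding wx by (rule power2_norm_add_scaleR)
    have "h z + \<rho> / 2 * (norm (z - x))\<^sup>2 \<le> h w + \<rho> / 2 * (norm (w - x))\<^sup>2"
      using opt by blast
    then have "t * A \<le> t * (t * B)"
      using hw unfolding nw A_def B_def by (simp add: algebra_simps power2_eq_square)
    then show ?thesis using t by simp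
  qed
  have "A \<le> 0"
  proof (rule ccontr)
    assume "\<not> A \<le> 0"
    define t where "t = min 1 (A / (2 * (B + 1)))"
    have "0 < t" "t \<le> 1" using \<open>\<not> A \<le> 0\<close> \<open>B \<ge> 0\<close> by (auto simp: t_def)
    have "t * B \<le> A / (2 * (B + 1)) * B"
      using \<open>B \<ge> 0\<close> by (intro mult_right_mono) (simp_all add: t_def)
    also have "\<dots> < A"
      using \<open>\<not> A \<le> 0\<close> \<open>B \<ge> 0\<close> by (simp add: field_simps add_nonneg_pos)
    finally show False using A_le[OF \<open>0 < t\<close> \<open>t \<le> 1\<close>] by simp
  qed
  then show ?thesis
    unfolding A_def by (simp add: inner_diff_left inner_diff_right algebra_simps)
qed

lemma finite_card_le_if_finite_subsets:
  assumes "\<And>F. finite F \<Longrightarrow> F \<subseteq> P \<Longrightarrow> real (card F) \<le> B"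
  shows "finite P \<and> real (card P) \<le> B"
proof -
  have "finite P"
  proof (rule ccontr)
    assume "infinite P"
    obtain n :: nat where n: "real n > B" using reals_Archimedean2 by blast
    obtain F where "finite F" "card F = n" "F \<subseteq> P"
      using infinite_arbitrarily_large[OF \<open>infinite P\<close>] by blast
    then show False using assms n by fastforce
  qed
  then show ?thesis using assms by blast
qed

lemma card_le_Suc_card_Int_lessThan_Max:
  fixes F P :: "nat set"
  assumes "finite F" "F \<noteq> {}" "F \<subseteq> P"
  shows "card F \<le> Suc (card (P \<inter> {..<Max F}))"
proof -
  have "F \<subseteq> insert (Max F) (P \<inter> {..<Max F})"
    using assms by (auto simp: order.not_eq_order_implies_strict)
  then have "card F \<le> card (insert (Max F) (P \<inter> {..<Max F}))"
    by (intro card_mono) auto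
  then show ?thesis by (simp add: card_insert_if)
qed

lemma card_Int_lessThan_Suc:
  "card (P \<inter> {..<Suc k}) = (if k \<in> P then Suc (card (P \<inter> {..<k})) else card (P \<inter> {..<k}))"
proof -
  have "P \<inter> {..<Suc k} = (if k \<in> P then insert k (P \<inter> {..<k}) else P \<inter> {..<k})"
    by (auto simp: lessThan_Suc)
  then show ?thesis by (simp add: card_insert_if)
qed

lemma card_contraction_steps_le:
  fixes a :: "nat \<Rightarrow> real"
  assumes decr: "\<And>k. a (Suc k) \<le> a k"
    and contr: "\<And>k. k \<in> P \<Longrightarrow> a (Suc k) \<le> (1 - \<beta> / 2) * a k"
    and above: "\<And>k. k \<in> P \<Longrightarrow> a k > r"
    and r: "r > 0" and a0: "a 0 > 0" and \<beta>: "0 < \<beta>" "\<beta> < 1"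
  shows "finite P \<and> real (card P) \<le> real_of_int (ceil_plus (2 * ln (a 0 / r) / \<beta>))"
proof (rule finite_card_le_if_finite_subsets)
  define q where "q = 1 - \<beta> / 2"
  have q: "0 < q" "q < 1" using \<beta> by (auto simp: q_def)
  define c where "c k = card (P \<inter> {..<k})" for k
  have pow: "a k \<le> q ^ c k * a 0" for k
  proof (induction k)
    case 0
    then show ?case by (simp add: c_def)
  next
    case (Suc k)
    show ?case
    proof (cases "k \<in> P")
      case True
      have "a (Suc k) \<le> q * a k" using contr[OF True] by (simp add: q_def)
      also have "\<dots> \<le> q * (q ^ c k * a 0)" using Suc q by (intro mult_left_mono) auto
      finally show ?thesis using True by (simp add: c_def card_Int_lessThan_Suc)
    next
      case False
      then show ?thesis using Suc decr[of k] by (simp add: c_def card_Int_lessThan_Suc)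
    qed
  qed
  fix F assume F: "finite F" "F \<subseteq> P"
  show "real (card F) \<le> real_of_int (ceil_plus (2 * ln (a 0 / r) / \<beta>))"
  proof (cases "F = {}")
    case True
    then show ?thesis by (simp add: ceil_plus_def)
  next
    case False
    define k where "k = Max F"
    have "k \<in> P" using F False by (simp add: k_def subset_iff)
    have "r / a 0 < q ^ c k"
      using above[OF \<open>k \<in> P\<close>] pow[of k] a0 by (simp add: field_simps)
    then have "ln (r / a 0) < real (c k) * ln q"
      using r a0 q by (simp add: ln_realpow[symmetric])
    also have "\<dots> \<le> real (c k) * (- \<beta> / 2)"
      using ln_add_one_self_le_self2[of "- \<beta> / 2"] \<beta> by (intro mult_left_mono) (auto simp: q_def)
    finally have "real (c k) < 2 * ln (a 0 / r) / \<beta>"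
      using \<beta> r a0 by (simp add: ln_div field_simps)
    then have "int (c k) < \<lceil>2 * ln (a 0 / r) / \<beta>\<rceil>" by (simp add: less_ceiling_iff)
    moreover have "card F \<le> Suc (c k)"
      using card_le_Suc_card_Int_lessThan_Max[OF F(1) False F(2)] by (simp add: c_def k_def)
    ultimately show ?thesis by (simp add: ceil_plus_def)
  qed
qed

lemma quadratic_decrease_potential_step:
  fixes A u u' R \<beta> :: real
  assumes "A * u \<le> R" "0 < u" "u \<le> R" "A \<ge> 0" "0 < \<beta>" "\<beta> < 1"
    and "u' \<le> u - \<beta> * u\<^sup>2 / (2 * R)"
  shows "(A + \<beta> / 2) * u' \<le> R"
proof -
  have R: "R > 0" using assms by simp
  have "\<beta> * u \<le> 1 * u"
    using assms by (intro mult_right_mono) auto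
  then have "\<beta> * u \<le> 2 * R"
    using assms by linarith
  then have "\<beta> * u / (2 * R) \<le> 1"
    using R by simp
  then have "(\<beta> * u / (2 * R)) * (R - A * u) \<le> R - A * u"
    using assms R by (intro mult_left_le_one_le) auto
  moreover have "\<beta>\<^sup>2 * u\<^sup>2 / (4 * R) \<ge> 0" using R by simp
  moreover have "(A + \<beta> / 2) * u' \<le> (A + \<beta> / 2) * (u - \<beta> * u\<^sup>2 / (2 * R))"
    using assms by (intro mult_left_mono) auto
  moreover have "(A + \<beta> / 2) * (u - \<beta> * u\<^sup>2 / (2 * R))
      = A * u + (\<beta> * u / (2 * R)) * (R - A * u) - \<beta>\<^sup>2 * u\<^sup>2 / (4 * R)"
    using R by (simp add: field_simps power2_eq_square)
  ultimately show ?thesis by linarith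
qed

lemma card_quadratic_decrease_steps_le:
  fixes a :: "nat \<Rightarrow> real"
  assumes decr: "\<And>k. a (Suc k) \<le> a k"
    and step: "\<And>k. k \<in> P \<Longrightarrow> a (Suc k) \<le> a k - \<beta> * (a k)\<^sup>2 / (2 * R)"
    and between: "\<And>k. k \<in> P \<Longrightarrow> \<epsilon> < a k \<and> a k \<le> R"
    and \<epsilon>: "\<epsilon> > 0" and \<beta>: "0 < \<beta>" "\<beta> < 1" and R: "R > 0"
  shows "finite P \<and> real (card P) \<le> 2 * R / (\<beta> * \<epsilon>)"
proof (rule finite_card_le_if_finite_subsets)
  define c where "c k = card (P \<inter> {..<k})" for k
  txt \<open>The potential (1 + \<beta> c_k / 2) a_k stays below R once P has been entered.\<close>
  have potential: "(1 + \<beta> / 2 * c k) * a k \<le> R" if "k \<in> P \<or> c k > 0" for k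
    using that
  proof (induction k)
    case 0
    then show ?case using between[of 0] by (simp add: c_def)
  next
    case (Suc k)
    have ck: "(1 + \<beta> / 2 * c k) * a k \<le> R" if "k \<in> P"
      using Suc.IH between[OF that] by (cases "c k > 0") auto
    show ?case
    proof (cases "k \<in> P")
      case True
      have "(1 + \<beta> / 2 * c k + \<beta> / 2) * a (Suc k) \<le> R"
        using quadratic_decrease_potential_step[OF ck[OF True] _ _ _ \<beta> step[OF True]]
          between[OF True] \<epsilon> \<beta> by auto
      moreover have "1 + \<beta> / 2 * c k + \<beta> / 2 \<le> 1 + \<beta> / 2 * c (Suc k)"
        using True by (simp add: c_def card_Int_lessThan_Suc algebra_simps)
      ultimately show ?thesis
        using True by (simp add: c_def card_Int_lessThan_Suc algebra_simps)
    next
      case False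
      then have "c (Suc k) = c k" by (simp add: c_def card_Int_lessThan_Suc)
      show ?thesis
      proof (cases "c k > 0")
        case True
        then have "(1 + \<beta> / 2 * c k) * a (Suc k) \<le> (1 + \<beta> / 2 * c k) * a k"
          using decr[of k] \<beta> by (intro mult_left_mono) auto
        then show ?thesis using Suc.IH True \<open>c (Suc k) = c k\<close> by simp
      next
        case False
        with \<open>c (Suc k) = c k\<close> show ?thesis using Suc.prems between by simp
      qed
    qed
  qed
  fix F assume F: "finite F" "F \<subseteq> P"
  show "real (card F) \<le> 2 * R / (\<beta> * \<epsilon>)"
  proof (cases "F = {}")
    case True
    then show ?thesis using R \<epsilon> \<beta> by simp
  next
    case False
    define k where "k = Max F"
    have "k \<in> P" using F False by (simp add: k_def subset_iff)
    have "(1 + \<beta> / 2 * c k) * \<epsilon> < (1 + \<beta> / 2 * c k) * a k"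
      using between[OF \<open>k \<in> P\<close>] \<beta> by (intro mult_strict_left_mono) (auto intro: add_pos_nonneg)
    then have "\<epsilon> + \<beta> / 2 * c k * \<epsilon> < R"
      using potential[of k] \<open>k \<in> P\<close> by (simp add: algebra_simps)
    moreover have "\<beta> * \<epsilon> \<le> 2 * \<epsilon>" using \<beta> \<epsilon> by simp
    ultimately have "(real (c k) + 1) * (\<beta> * \<epsilon>) \<le> 2 * R" by (simp add: algebra_simps)
    have "card F \<le> Suc (c k)"
      using card_le_Suc_card_Int_lessThan_Max[OF F(1) False F(2)] by (simp add: c_def k_def)
    then have "real (card F) \<le> real (c k) + 1" by simp
    also have "\<dots> \<le> 2 * R / (\<beta> * \<epsilon>)"
      using \<open>(real (c k) + 1) * (\<beta> * \<epsilon>) \<le> 2 * R\<close> \<beta> \<epsilon> by (simp add: pos_le_divide_eq)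
    finally show ?thesis .
  qed
qed

lemma card_le_if_covered_by_blocks:
  fixes A S :: "nat set"
  assumes "finite S" and cover: "\<forall>k\<in>A. \<exists>s\<in>S. s \<le> k \<and> k < s + n"
  shows "finite A \<and> card A \<le> card S * n"
proof -
  have sub: "A \<subseteq> (\<Union>s\<in>S. {s..<s + n})" using cover by fastforce
  then have "card A \<le> card (\<Union>s\<in>S. {s..<s + n})"
    using \<open>finite S\<close> by (intro card_mono) auto
  also have "\<dots> \<le> (\<Sum>s\<in>S. card {s..<s + n})" by (rule card_UN_le[OF \<open>finite S\<close>])
  finally show ?thesis using sub \<open>finite S\<close> finite_subset by fastforce
qed

lemma null_run_length_arith:
  fixes m Q \<rho> L \<beta> :: real
  assumes Q: "Q > 0" and \<rho>: "\<rho> > 0" and L: "L \<ge> 0" and \<beta>: "\<beta> < 1"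
    and le: "m * (\<rho> / (2 * (\<rho> + 4 * L)) * (1 - \<beta>) * (Q / (2 * (2 * L + \<rho>))))
      \<le> Q / (2 * \<rho>) - Q / (2 * (2 * L + \<rho>))"
  shows "m \<le> 4 * L * (\<rho> + 4 * L) / ((1 - \<beta>) * \<rho>\<^sup>2)"
proof -
  define K where "K = 2 * L + \<rho>"
  define M where "M = \<rho> + 4 * L"
  have pos: "M > 0" "K > 0" "1 - \<beta> > 0" using \<rho> L \<beta> by (auto simp: K_def M_def)
  have "K - \<rho> = 2 * L" by (simp add: K_def)
  have "Q / (2 * \<rho>) - Q / (2 * K) = Q * (K - \<rho>) / (2 * \<rho> * K)"
    using pos \<rho> by (simp add: field_simps)
  also have "\<dots> = (L / \<rho>) * (Q / K)"
    unfolding \<open>K - \<rho> = 2 * L\<close> using pos \<rho> by (simp add: field_simps)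
  finally have "Q / (2 * \<rho>) - Q / (2 * K) = (L / \<rho>) * (Q / K)" .
  moreover have "m * (\<rho> / (2 * M) * (1 - \<beta>) * (Q / (2 * K)))
      = (m * \<rho> * (1 - \<beta>) / (4 * M)) * (Q / K)"
    using pos by (simp add: field_simps)
  ultimately have "(m * \<rho> * (1 - \<beta>) / (4 * M)) * (Q / K) \<le> (L / \<rho>) * (Q / K)"
    using le unfolding K_def M_def by simp
  then have "m * \<rho> * (1 - \<beta>) / (4 * M) \<le> L / \<rho>"
    using mult_right_le_imp_le Q pos by (metis divide_pos_pos)
  then have "m * ((1 - \<beta>) * \<rho>\<^sup>2) \<le> 4 * L * M"
    using \<rho> pos by (simp add: field_simps power2_eq_square)
  then show ?thesis
    using pos \<rho> unfolding M_def by (simp add: pos_le_divide_eq)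
qed

lemma null_run_bound_le:
  fixes L \<beta> \<rho> :: real
  assumes L: "L \<ge> 0" and \<rho>: "\<rho> > 0" and \<beta>: "0 < \<beta>" "\<beta> < 1"
  shows "4 * L * (\<rho> + 4 * L) / ((1 - \<beta>) * \<rho>\<^sup>2) \<le> 16 * (L + \<rho>)^3 / ((1 - \<beta>)^2 * \<rho>^3)"
proof -
  have \<beta>': "0 < 1 - \<beta>" "1 - \<beta> \<le> 1" using \<beta> by auto
  have "4 * L * (\<rho> + 4 * L) * \<rho> = 4 * L * \<rho>^2 + 16 * L^2 * \<rho>"
    by (simp add: power2_eq_square algebra_simps)
  also have "\<dots> \<le> 16 * (L^3 + 3 * L^2 * \<rho> + 3 * L * \<rho>^2 + \<rho>^3)"
    using L \<rho> by (simp add: algebra_simps)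
  also have "\<dots> = 16 * (L + \<rho>)^3"
    by (simp add: power3_eq_cube power2_eq_square algebra_simps)
  also have "\<dots> \<le> 16 * (L + \<rho>)^3 / (1 - \<beta>)"
    using \<beta>' L \<rho> by (simp add: le_divide_eq)
  finally have num: "4 * L * (\<rho> + 4 * L) * \<rho> \<le> 16 * (L + \<rho>)^3 / (1 - \<beta>)" .
  have "4 * L * (\<rho> + 4 * L) / ((1 - \<beta>) * \<rho>\<^sup>2) = (4 * L * (\<rho> + 4 * L) * \<rho>) / ((1 - \<beta>) * \<rho>^3)"
    using \<rho> by (simp add: power2_eq_square power3_eq_cube)
  also have "\<dots> \<le> (16 * (L + \<rho>)^3 / (1 - \<beta>)) / ((1 - \<beta>) * \<rho>^3)"
    using num \<beta>' \<rho> by (intro divide_right_mono) auto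
  also have "\<dots> = 16 * (L + \<rho>)^3 / ((1 - \<beta>)^2 * \<rho>^3)"
    by (simp add: power2_eq_square)
  finally show ?thesis .
qed

locale proximal_bundle =
  fixes f :: "'a::euclidean_space \<Rightarrow> real"
    and grad g :: "'a \<Rightarrow> 'a"
    and L \<beta> \<rho> :: real
    and x z :: "nat \<Rightarrow> 'a"
    and fm :: "nat \<Rightarrow> 'a \<Rightarrow> real"
  assumes convex: "convex_on UNIV f"
    and grad: "\<forall>y. (f has_derivative (\<lambda>h. inner (grad y) h)) (at y)"
    and lipschitz: "\<forall>u v. norm (grad u - grad v) \<le> L * norm (u - v)"
    and subgrad: "\<forall>y. g y \<in> subdiff f y"
    and \<beta>: "0 < \<beta>" "\<beta> < 1"
    and \<rho>: "\<rho> > 0"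
    and run: "is_pbm_run f g \<beta> \<rho> x z fm"
begin

abbreviation "desc k \<equiv> pbm_descent f \<beta> x z fm k"

definition fresh_centre :: "nat \<Rightarrow> bool" where
  "fresh_centre s \<longleftrightarrow> s = 0 \<or> (\<exists>d. s = Suc d \<and> desc d)"

definition prox_value :: "nat \<Rightarrow> real" where
  "prox_value k = fm k (z (Suc k)) + \<rho> / 2 * (norm (z (Suc k) - x k))\<^sup>2"

lemma model_initial: "fm 0 = (\<lambda>y. f (x 0) + inner (g (x 0)) (y - x 0))"
  and model_convex: "convex_on UNIV (fm k)"
  and prox_minimal: "prox_value k \<le> fm k y + \<rho> / 2 * (norm (y - x k))\<^sup>2"
  and x_Suc: "x (Suc k) = (if desc k then z (Suc k) else x k)"
  and model_Suc_le: "fm (Suc k) y \<le> f y"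
  and model_Suc_ge_cut: "fm (Suc k) y \<ge> f (z (Suc k)) + inner (g (z (Suc k))) (y - z (Suc k))"
  and model_Suc_ge_aggregate: "\<not> desc k \<Longrightarrow>
      fm (Suc k) y \<ge> fm k (z (Suc k)) + inner (\<rho> *\<^sub>R (x k - z (Suc k))) (y - z (Suc k))"
  using run unfolding is_pbm_run_def prox_value_def by auto

lemma L_nonneg: "L \<ge> 0"
proof -
  obtain b :: 'a where "b \<in> Basis" using nonempty_Basis by blast
  then have "norm b = 1" by simp
  then show ?thesis
    using lipschitz[rule_format, of b 0] by (metis mult.right_neutral diff_zero norm_ge_zero order_trans)
qed

lemma f_le_quadratic_upper: "f y \<le> f u + inner (grad u) (y - u) + L * (norm (y - u))\<^sup>2"
  using lipschitz_gradient_upper_bound[OF grad lipschitz L_nonneg] .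

lemma f_ge_cut: "f y \<ge> f u + inner (g u) (y - u)"
  using subgrad unfolding subdiff_def by blast

lemma g_eq_grad: "g u = grad u"
proof -
  have "inner (g u - grad u) d \<le> 0 + L * (norm d)\<^sup>2" for d
    using f_ge_cut[of u "u + d"] f_le_quadratic_upper[of "u + d" u] by (simp add: inner_diff_left)
  from norm_le_of_inner_le_quadratic[OF this L_nonneg] show ?thesis by simp
qed

lemma f_ge_linearization: "f y \<ge> f u + inner (grad u) (y - u)"
  using f_ge_cut g_eq_grad by metis

lemma model_le: "fm k y \<le> f y"
  using model_Suc_le f_ge_cut by (cases k) (auto simp: model_initial)

lemma model_ge_aggregate: "fm k y \<ge> fm k (z (Suc k)) + inner (\<rho> *\<^sub>R (x k - z (Suc k))) (y - z (Suc k))"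
  using prox_point_optimality[OF model_convex _ \<rho>] prox_minimal unfolding prox_value_def by blast

text \<open>The aggregate \<rho>(x_k - z_{k+1}) is a subgradient of the model at z_{k+1}, hence of f up to the
  model error there, and L-smoothness turns this into closeness to the gradient.\<close>
lemma aggregate_near_grad:
  "(norm (grad (z (Suc k)) - \<rho> *\<^sub>R (x k - z (Suc k))))\<^sup>2
    \<le> 4 * L * (f (z (Suc k)) - fm k (z (Suc k)))"
proof -
  let ?s = "\<rho> *\<^sub>R (x k - z (Suc k))"
  have "inner (?s - grad (z (Suc k))) d \<le> (f (z (Suc k)) - fm k (z (Suc k))) + L * (norm d)\<^sup>2" for d
    using model_le[of k "z (Suc k) + d"] model_ge_aggregate[of k "z (Suc k) + d"]
      f_le_quadratic_upper[of "z (Suc k) + d" "z (Suc k)"]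
    by (simp add: inner_diff_left)
  from norm_le_of_inner_le_quadratic[OF this L_nonneg] show ?thesis
    by (simp add: norm_minus_commute)
qed

lemma null_step_model_error_ge:
  assumes "\<not> desc k"
  shows "f (z (Suc k)) - fm k (z (Suc k)) \<ge> (1 - \<beta>) * (f (x k) - prox_value k)"
proof -
  have "f (x k) - f (z (Suc k)) < \<beta> * (f (x k) - fm k (z (Suc k)))"
    using assms unfolding pbm_descent_def by simp
  moreover have "(1 - \<beta>) * (f (x k) - prox_value k) \<le> (1 - \<beta>) * (f (x k) - fm k (z (Suc k)))"
    using \<beta> \<rho> by (intro mult_left_mono) (auto simp: prox_value_def)
  ultimately show ?thesis by (simp add: algebra_simps)
qed

lemma null_step_prox_value_increase:
  assumes null: "\<not> desc k"
  shows "prox_value (Suc k) \<ge> prox_value k + \<rho> / (2 * (\<rho> + 4 * L)) * (f (z (Suc k)) - fm k (z (Suc k)))"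
proof -
  define X where "X = x k"
  define zz where "zz = z (Suc k)"
  define z' where "z' = z (Suc (Suc k))"
  define e where "e = f zz - fm k zz"
  define s where "s = \<rho> *\<^sub>R (X - zz)"
  define w where "w = grad zz - s"
  define d where "d = z' - zz"
  define \<theta> where "\<theta> = \<rho> / (\<rho> + 4 * L)"
  have \<theta>: "0 < \<theta>" "\<theta> \<le> 1" using \<rho> L_nonneg by (auto simp: \<theta>_def)
  have "e \<ge> 0" using model_le unfolding e_def by simp
  have pv: "prox_value k = fm k zz + \<rho> / 2 * (norm (zz - X))\<^sup>2"
    unfolding prox_value_def X_def zz_def ..
  have pv': "prox_value (Suc k) = fm (Suc k) z' + \<rho> / 2 * (norm (z' - X))\<^sup>2"
    using null x_Suc[of k] unfolding prox_value_def X_def z'_def by simp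
  txt \<open>The new model dominates the convex combination of the aggregate and the new cut with
    weight \<theta>, the weight that balances the linear gain against the gradient mismatch w.\<close>
  have aggregate: "fm k zz + inner s d \<le> fm (Suc k) z'"
    using model_Suc_ge_aggregate[OF null] unfolding s_def zz_def z'_def d_def X_def by simp
  have cut: "f zz + inner (grad zz) d \<le> fm (Suc k) z'"
    using model_Suc_ge_cut[of k] g_eq_grad unfolding zz_def z'_def d_def by simp
  have "(1 - \<theta>) * (fm k zz + inner s d) \<le> (1 - \<theta>) * fm (Suc k) z'"
    using aggregate \<theta> by (intro mult_left_mono) auto
  moreover have "\<theta> * (f zz + inner (grad zz) d) \<le> \<theta> * fm (Suc k) z'"
    using cut \<theta> by (intro mult_left_mono) auto
  ultimately have combination:
    "(1 - \<theta>) * (fm k zz + inner s d) + \<theta> * (f zz + inner (grad zz) d) \<le> fm (Suc k) z'"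
    by (simp add: algebra_simps)
  have nz': "(norm (z' - X))\<^sup>2 = (norm (zz - X))\<^sup>2 + 2 * inner (zz - X) d + (norm d)\<^sup>2"
    using power2_norm_add_scaleR[of "zz - X" 1 d] unfolding d_def by simp
  have sd: "inner s d = - \<rho> * inner (zz - X) d"
    unfolding s_def by (simp add: inner_diff_left inner_diff_right algebra_simps)
  have "(1 - \<theta>) * (fm k zz + inner s d) + \<theta> * (f zz + inner (grad zz) d)
      + \<rho> / 2 * (norm (z' - X))\<^sup>2 = prox_value k + \<theta> * e + (\<theta> * inner w d + \<rho> / 2 * (norm d)\<^sup>2)"
    unfolding nz' sd pv e_def w_def inner_diff_left by (simp add: algebra_simps)
  with combination have
    "prox_value (Suc k) \<ge> prox_value k + \<theta> * e + (\<theta> * inner w d + \<rho> / 2 * (norm d)\<^sup>2)"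
    unfolding pv' by linarith
  moreover have "\<theta> * inner w d + \<rho> / 2 * (norm d)\<^sup>2 \<ge> - (\<theta>\<^sup>2 * (4 * L * e) / (2 * \<rho>))"
  proof -
    define v where "v = \<theta> *\<^sub>R w"
    have "(norm v)\<^sup>2 \<le> \<theta>\<^sup>2 * (4 * L * e)"
      using aggregate_near_grad[of k] \<theta>
      unfolding v_def w_def s_def e_def X_def zz_def by (simp add: power_mult_distrib mult_left_mono)
    then have "(norm v)\<^sup>2 / (2 * \<rho>) \<le> \<theta>\<^sup>2 * (4 * L * e) / (2 * \<rho>)"
      using \<rho> by (intro divide_right_mono) simp_all
    moreover have "inner v d + \<rho> / 2 * (norm d)\<^sup>2 \<ge> - ((norm v)\<^sup>2 / (2 * \<rho>))"
      by (rule inner_add_quadratic_ge[OF \<rho>])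
    moreover have "inner v d = \<theta> * inner w d" by (simp add: v_def)
    ultimately show ?thesis by linarith
  qed
  moreover have "\<theta>\<^sup>2 * (4 * L * e) / (2 * \<rho>) \<le> \<theta> * e / 2"
  proof -
    have "\<theta>\<^sup>2 * (4 * L * e) / (2 * \<rho>) = (\<theta> * e) * (2 * L * \<theta> / \<rho>)"
      using \<rho> by (simp add: power2_eq_square field_simps)
    also have "2 * L * \<theta> / \<rho> = 2 * L / (\<rho> + 4 * L)"
      using \<rho> by (simp add: \<theta>_def)
    also have "(\<theta> * e) * (2 * L / (\<rho> + 4 * L)) \<le> (\<theta> * e) * (1 / 2)"
      using \<rho> L_nonneg \<theta> \<open>e \<ge> 0\<close> by (intro mult_left_mono) (auto simp: field_simps)
    finally show ?thesis by simp
  qed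
  moreover have "\<theta> * e / 2 = \<rho> / (2 * (\<rho> + 4 * L)) * e" by (simp add: \<theta>_def)
  ultimately show ?thesis unfolding e_def zz_def by linarith
qed

lemma prox_gap_ge_grad: "f (x k) - prox_value k \<ge> (norm (grad (x k)))\<^sup>2 / (2 * (2 * L + \<rho>))"
proof -
  define X where "X = x k"
  define G where "G = grad X"
  define K where "K = 2 * L + \<rho>"
  have "K > 0" using L_nonneg \<rho> by (simp add: K_def)
  txt \<open>Test the proximal subproblem at the gradient step X - G/K.\<close>
  define y where "y = X - (1 / K) *\<^sub>R G"
  have "prox_value k \<le> fm k y + \<rho> / 2 * (norm (y - X))\<^sup>2"
    using prox_minimal unfolding X_def .
  also have "\<dots> \<le> f X + inner G (y - X) + K / 2 * (norm (y - X))\<^sup>2"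
  proof -
    have "K / 2 * (norm (y - X))\<^sup>2 = \<rho> / 2 * (norm (y - X))\<^sup>2 + L * (norm (y - X))\<^sup>2"
      by (simp add: K_def algebra_simps)
    then show ?thesis using model_le[of k y] f_le_quadratic_upper[of y X] unfolding G_def by linarith
  qed
  also have "\<dots> = f X - (norm G)\<^sup>2 / (2 * K)"
    using \<open>K > 0\<close> unfolding y_def by (simp add: dot_square_norm power2_eq_square field_simps)
  finally show ?thesis unfolding X_def G_def K_def by simp
qed

lemma model_ge_linearization_at_fresh_centre:
  assumes "fresh_centre s"
  shows "fm s y \<ge> f (x s) + inner (grad (x s)) (y - x s)"
  using assms unfolding fresh_centre_def
proof
  assume "s = 0"
  then show ?thesis using model_initial g_eq_grad by simp
next
  assume "\<exists>d. s = Suc d \<and> desc d"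
  then obtain d where "s = Suc d" "desc d" by blast
  then show ?thesis using model_Suc_ge_cut[of d y] x_Suc[of d] g_eq_grad by simp
qed

lemma prox_gap_le_at_fresh_centre:
  assumes "fresh_centre s"
  shows "f (x s) - prox_value s \<le> (norm (grad (x s)))\<^sup>2 / (2 * \<rho>)"
  using model_ge_linearization_at_fresh_centre[OF assms, of "z (Suc s)"]
    inner_add_quadratic_ge[OF \<rho>, of "grad (x s)" "z (Suc s) - x s"]
  unfolding prox_value_def by linarith

lemma null_run_length_le:
  assumes fresh: "fresh_centre s"
    and not_minimal: "f p < f (x s)"
    and nulls: "\<forall>i<m. \<not> desc (s + i)"
  shows "real m \<le> 4 * L * (\<rho> + 4 * L) / ((1 - \<beta>) * \<rho>\<^sup>2)"
proof -
  define X where "X = x s"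
  define Q where "Q = (norm (grad X))\<^sup>2"
  define lo where "lo = Q / (2 * (2 * L + \<rho>))"
  define c where "c = \<rho> / (2 * (\<rho> + 4 * L))"
  have c: "c \<ge> 0" using \<rho> L_nonneg by (simp add: c_def)
  have centre: "x (s + i) = X" if "i \<le> m" for i
    using that
  proof (induction i)
    case 0
    then show ?case by (simp add: X_def)
  next
    case (Suc i)
    then show ?case using nulls x_Suc[of "s + i"] by simp
  qed
  have "grad X \<noteq> 0"
    using f_ge_linearization[of X p] not_minimal unfolding X_def by auto
  then have "Q > 0" by (simp add: Q_def)
  have lo_le: "lo \<le> f X - prox_value (s + i)" if "i \<le> m" for i
    using prox_gap_ge_grad[of "s + i"] centre[OF that] unfolding lo_def Q_def by simp
  txt \<open>The gap f X - prox_value starts below Q/(2\<rho>), never drops below lo, and each null step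
    lowers it by at least c (1 - \<beta>) lo.\<close>
  have decrease: "f X - prox_value (s + i) \<le> Q / (2 * \<rho>) - real i * (c * (1 - \<beta>) * lo)"
    if "i \<le> m" for i
    using that
  proof (induction i)
    case 0
    then show ?case using prox_gap_le_at_fresh_centre[OF fresh] unfolding X_def Q_def by simp
  next
    case (Suc i)
    then have null: "\<not> desc (s + i)" using nulls by simp
    have "(1 - \<beta>) * lo \<le> (1 - \<beta>) * (f (x (s + i)) - prox_value (s + i))"
      using lo_le[of i] Suc.prems centre[of i] \<beta> by (intro mult_left_mono) auto
    then have "c * ((1 - \<beta>) * lo) \<le> c * (f (z (Suc (s + i))) - fm (s + i) (z (Suc (s + i))))"
      using null_step_model_error_ge[OF null] c by (intro mult_left_mono) auto
    then have "f X - prox_value (s + Suc i) \<le> f X - prox_value (s + i) - c * (1 - \<beta>) * lo"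
      using null_step_prox_value_increase[OF null, folded c_def] by simp
    then show ?case
      using Suc by (simp add: algebra_simps)
  qed
  have "real m * (c * (1 - \<beta>) * lo) \<le> Q / (2 * \<rho>) - lo"
    using decrease[of m] lo_le[of m] by simp
  then show ?thesis
    using null_run_length_arith[OF \<open>Q > 0\<close> \<rho> L_nonneg \<beta>(2)] unfolding c_def lo_def
    by (simp add: mult.assoc)
qed

abbreviation "gap k \<equiv> f (x k) - Inf (range f)"

definition descents :: "real \<Rightarrow> nat set" where
  "descents \<epsilon> = {k. gap k > \<epsilon> \<and> desc k}"

definition nulls :: "real \<Rightarrow> nat set" where
  "nulls \<epsilon> = {k. gap k > \<epsilon> \<and> \<not> desc k}"

lemma predicted_decrease_ge: "f (x k) - fm k (z (Suc k)) \<ge> f (x k) - f y - \<rho> / 2 * (norm (y - x k))\<^sup>2"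
proof -
  have "0 \<le> \<rho> / 2 * (norm (z (Suc k) - x k))\<^sup>2" using \<rho> by simp
  then show ?thesis using prox_minimal[of k y] model_le[of k y] unfolding prox_value_def by linarith
qed

lemma descent_step_f_le: "desc k \<Longrightarrow> f (x (Suc k)) \<le> f (x k) - \<beta> * (f (x k) - fm k (z (Suc k)))"
  using x_Suc[of k] unfolding pbm_descent_def by simp

lemma f_x_Suc_le: "f (x (Suc k)) \<le> f (x k)"
proof (cases "desc k")
  case True
  have "f (x k) - fm k (z (Suc k)) \<ge> 0" using predicted_decrease_ge[of k "x k"] by simp
  then show ?thesis using descent_step_f_le[OF True] \<beta> by (smt (verit) mult_nonneg_nonneg)
next
  case False
  then show ?thesis using x_Suc[of k] by simp
qed

lemma f_x_antimono: "k \<le> k' \<Longrightarrow> f (x k') \<le> f (x k)"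
  using lift_Suc_antimono_le[of "\<lambda>k. f (x k)", OF f_x_Suc_le] .

lemma last_fresh_centre:
  "\<exists>s\<le>k. fresh_centre s \<and> (\<forall>i. s \<le> i \<and> i < k \<longrightarrow> \<not> desc i)"
proof (induction k)
  case 0
  then show ?case by (auto simp: fresh_centre_def)
next
  case (Suc k)
  show ?case
  proof (cases "desc k")
    case True
    then show ?thesis by (auto simp: fresh_centre_def)
  next
    case False
    with Suc.IH show ?thesis by (metis le_SucI less_Suc_eq)
  qed
qed

lemma null_step_in_run:
  assumes k: "k \<in> nulls \<epsilon>" and \<epsilon>: "\<epsilon> \<ge> 0" and p: "f p = Inf (range f)"
  shows "\<exists>s \<in> insert 0 (Suc ` descents \<epsilon>). s \<le> k \<and> k < s + nat \<lfloor>4 * L * (\<rho> + 4 * L) / ((1 - \<beta>) * \<rho>\<^sup>2)\<rfloor>"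
proof -
  obtain s where "s \<le> k" and fresh: "fresh_centre s"
    and between: "\<forall>i. s \<le> i \<and> i < k \<longrightarrow> \<not> desc i"
    using last_fresh_centre by blast
  have "\<not> desc k" "gap k > \<epsilon>" using k unfolding nulls_def by auto
  have "\<forall>i < k - s + 1. \<not> desc (s + i)"
  proof (intro allI impI)
    fix i assume "i < k - s + 1"
    then have "s + i < k \<or> s + i = k" using \<open>s \<le> k\<close> by linarith
    then show "\<not> desc (s + i)" using between \<open>\<not> desc k\<close> by auto
  qed
  moreover have "f p < f (x s)"
    using f_x_antimono[OF \<open>s \<le> k\<close>] \<open>gap k > \<epsilon>\<close> \<epsilon> p by simp
  ultimately have "real (k - s + 1) \<le> 4 * L * (\<rho> + 4 * L) / ((1 - \<beta>) * \<rho>\<^sup>2)"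
    using null_run_length_le[OF fresh] by blast
  then have "k - s + 1 \<le> nat \<lfloor>4 * L * (\<rho> + 4 * L) / ((1 - \<beta>) * \<rho>\<^sup>2)\<rfloor>"
    by (rule le_nat_floor)
  then have "k < s + nat \<lfloor>4 * L * (\<rho> + 4 * L) / ((1 - \<beta>) * \<rho>\<^sup>2)\<rfloor>"
    using \<open>s \<le> k\<close> by linarith
  moreover have "s \<in> insert 0 (Suc ` descents \<epsilon>)"
    using fresh unfolding fresh_centre_def
  proof
    assume "\<exists>d. s = Suc d \<and> desc d"
    then obtain d where "s = Suc d" "desc d" by blast
    then have "d \<in> descents \<epsilon>"
      using f_x_antimono[of d k] \<open>s \<le> k\<close> \<open>gap k > \<epsilon>\<close> unfolding descents_def by simp
    then show ?thesis using \<open>s = Suc d\<close> by simp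
  qed simp
  ultimately show ?thesis using \<open>s \<le> k\<close> by blast
qed

lemma card_nulls_le:
  assumes "finite (descents \<epsilon>)" "\<epsilon> \<ge> 0" "f p = Inf (range f)"
  shows "finite (nulls \<epsilon>) \<and> real (card (nulls \<epsilon>))
    \<le> (real (card (descents \<epsilon>)) + 1) * (4 * L * (\<rho> + 4 * L) / ((1 - \<beta>) * \<rho>\<^sup>2))"
proof -
  define B where "B = 4 * L * (\<rho> + 4 * L) / ((1 - \<beta>) * \<rho>\<^sup>2)"
  define S where "S = insert 0 (Suc ` descents \<epsilon>)"
  have "finite S" using assms(1) by (simp add: S_def)
  from card_le_if_covered_by_blocks[OF this, of "nulls \<epsilon>" "nat \<lfloor>B\<rfloor>"]
  have N: "finite (nulls \<epsilon>) \<and> card (nulls \<epsilon>) \<le> card S * nat \<lfloor>B\<rfloor>"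
    using null_step_in_run[OF _ assms(2,3)] unfolding S_def B_def by blast
  have "card S \<le> card (descents \<epsilon>) + 1"
    using assms(1) card_image_le[OF assms(1), of Suc] by (simp add: S_def card_insert_if)
  moreover have "B \<ge> 0" using L_nonneg \<rho> \<beta> by (simp add: B_def)
  ultimately have "real (card S) * real (nat \<lfloor>B\<rfloor>) \<le> (real (card (descents \<epsilon>)) + 1) * B"
    by (intro mult_mono) auto
  moreover have "real (card (nulls \<epsilon>)) \<le> real (card S) * real (nat \<lfloor>B\<rfloor>)"
    using N of_nat_mono[of "card (nulls \<epsilon>)" "card S * nat \<lfloor>B\<rfloor>"] by simp
  ultimately show ?thesis using N unfolding B_def by linarith
qed

lemma exists_near_minimizer:
  assumes "{y. f y = Inf (range f)} \<noteq> {}"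
    and "bdd_above (range (\<lambda>k. (infdist (x k) {y. f y = Inf (range f)})\<^sup>2))"
  shows "\<exists>p. f p = Inf (range f) \<and> (norm (p - x k))\<^sup>2 \<le> (SUP k. (infdist (x k) {y. f y = Inf (range f)})\<^sup>2)"
proof -
  have "continuous_on UNIV f"
    using grad by (meson has_derivative_continuous continuous_at_imp_continuous_on)
  then have "closed {y. f y = Inf (range f)}" by (rule closed_Collect_eq) simp
  then obtain p where "f p = Inf (range f)" "infdist (x k) {y. f y = Inf (range f)} = dist (x k) p"
    using infdist_attains_inf[OF _ assms(1)] by blast
  moreover have "(infdist (x k) {y. f y = Inf (range f)})\<^sup>2
      \<le> (SUP k. (infdist (x k) {y. f y = Inf (range f)})\<^sup>2)"
    by (rule cSUP_upper[OF _ assms(2)]) simp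
  ultimately show ?thesis by (auto simp: dist_norm norm_minus_commute)
qed

end

locale proximal_bundle_bounded = proximal_bundle +
  fixes D2 :: real
  assumes near_minimizer: "\<forall>k. \<exists>p. f p = Inf (range f) \<and> (norm (p - x k))\<^sup>2 \<le> D2"
    and D2_pos: "D2 > 0"
begin

lemma descent_step_contraction:
  assumes "desc k" "\<rho> * D2 < gap k"
  shows "gap (Suc k) \<le> (1 - \<beta> / 2) * gap k"
proof -
  obtain p where p: "f p = Inf (range f)" "(norm (p - x k))\<^sup>2 \<le> D2" using near_minimizer by blast
  define a where "a = gap k"
  have "\<rho> / 2 * (norm (p - x k))\<^sup>2 \<le> \<rho> / 2 * D2" using p \<rho> by simp
  then have "f (x k) - fm k (z (Suc k)) \<ge> a - \<rho> / 2 * D2"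
    using predicted_decrease_ge[of k p] p unfolding a_def by linarith
  also have "a - \<rho> / 2 * D2 \<ge> a / 2" using assms(2) by (simp add: a_def)
  finally have "\<beta> * (f (x k) - fm k (z (Suc k))) \<ge> \<beta> * (a / 2)"
    using \<beta> by (intro mult_left_mono) auto
  then have "gap (Suc k) \<le> a - \<beta> * (a / 2)"
    using descent_step_f_le[OF assms(1)] a_def by linarith
  also have "a - \<beta> * (a / 2) = (1 - \<beta> / 2) * gap k" by (simp add: a_def field_simps)
  finally show ?thesis .
qed

lemma descent_step_quadratic_decrease:
  assumes "desc k" "0 \<le> gap k" "gap k \<le> \<rho> * D2"
  shows "gap (Suc k) \<le> gap k - \<beta> * (gap k)\<^sup>2 / (2 * (\<rho> * D2))"
proof -
  obtain p where p: "f p = Inf (range f)" "(norm (p - x k))\<^sup>2 \<le> D2" using near_minimizer by blast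
  have "\<rho> * D2 > 0" using \<rho> D2_pos by simp
  define a where "a = gap k"
  txt \<open>Compare with the point of the segment from x_k to p that minimizes the quadratic bound.\<close>
  define t where "t = a / (\<rho> * D2)"
  have t: "0 \<le> t" "t \<le> 1" using assms \<open>\<rho> * D2 > 0\<close> by (auto simp: t_def a_def)
  define y where "y = (1 - t) *\<^sub>R x k + t *\<^sub>R p"
  have "f y \<le> (1 - t) * f (x k) + t * f p"
    unfolding y_def using convex_onD[OF convex t] by simp
  then have "f (x k) - f y \<ge> t * a" using p by (simp add: a_def algebra_simps)
  moreover have "y - x k = t *\<^sub>R (p - x k)" by (simp add: y_def algebra_simps)
  then have "\<rho> / 2 * (norm (y - x k))\<^sup>2 \<le> \<rho> / 2 * (t\<^sup>2 * D2)"
    using p t \<rho> by (simp add: power_mult_distrib mult_left_mono)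
  ultimately have "f (x k) - fm k (z (Suc k)) \<ge> t * a - \<rho> / 2 * (t\<^sup>2 * D2)"
    using predicted_decrease_ge[of k y] by linarith
  also have "t * a - \<rho> / 2 * (t\<^sup>2 * D2) = a\<^sup>2 / (2 * (\<rho> * D2))"
    using \<open>\<rho> * D2 > 0\<close> unfolding t_def by (simp add: field_simps power2_eq_square)
  finally have "\<beta> * (f (x k) - fm k (z (Suc k))) \<ge> \<beta> * (a\<^sup>2 / (2 * (\<rho> * D2)))"
    using \<beta> by (intro mult_left_mono) auto
  then show ?thesis using descent_step_f_le[OF assms(1)] unfolding a_def by simp
qed

lemma card_descents_le:
  assumes \<epsilon>: "0 < \<epsilon>" "\<epsilon> \<le> gap 0"
  shows "finite (descents \<epsilon>) \<and> real (card (descents \<epsilon>))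
    \<le> 2 * \<rho> * D2 / (\<beta> * \<epsilon>) + real_of_int (ceil_plus (2 * ln (gap 0 / (\<rho> * D2)) / \<beta>))"
proof -
  have R: "\<rho> * D2 > 0" using \<rho> D2_pos by simp
  define P1 where "P1 = {k. desc k \<and> gap k > \<rho> * D2}"
  define P2 where "P2 = {k. desc k \<and> \<epsilon> < gap k \<and> gap k \<le> \<rho> * D2}"
  have C1: "finite P1 \<and> real (card P1) \<le> real_of_int (ceil_plus (2 * ln (gap 0 / (\<rho> * D2)) / \<beta>))"
    by (rule card_contraction_steps_le)
      (use f_x_Suc_le descent_step_contraction R \<epsilon> \<beta> in \<open>auto simp: P1_def\<close>)
  have C2: "finite P2 \<and> real (card P2) \<le> 2 * (\<rho> * D2) / (\<beta> * \<epsilon>)"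
  proof (rule card_quadratic_decrease_steps_le[where a = "\<lambda>k. gap k"])
    fix k assume "k \<in> P2"
    then show "gap (Suc k) \<le> gap k - \<beta> * (gap k)\<^sup>2 / (2 * (\<rho> * D2))"
      using \<epsilon> by (intro descent_step_quadratic_decrease) (auto simp: P2_def)
  qed (use f_x_Suc_le R \<epsilon> \<beta> in \<open>auto simp: P2_def\<close>)
  have sub: "descents \<epsilon> \<subseteq> P1 \<union> P2" unfolding descents_def P1_def P2_def by auto
  then have "finite (descents \<epsilon>)" using C1 C2 by (meson finite_UnI finite_subset)
  have "card (descents \<epsilon>) \<le> card (P1 \<union> P2)" using sub C1 C2 by (intro card_mono) auto
  also have "\<dots> \<le> card P1 + card P2" by (rule card_Un_le)
  finally have "real (card (descents \<epsilon>)) \<le> real (card P1) + real (card P2)" by linarith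
  moreover have "2 * (\<rho> * D2) / (\<beta> * \<epsilon>) = 2 * \<rho> * D2 / (\<beta> * \<epsilon>)" by simp
  ultimately show ?thesis using \<open>finite (descents \<epsilon>)\<close> C1 C2 by linarith
qed

end

theorem theorem2:
  fixes f :: "'a::euclidean_space \<Rightarrow> real"
    and grad g :: "'a \<Rightarrow> 'a"
    and L \<beta> \<rho> \<epsilon> D2 :: real
    and x z :: "nat \<Rightarrow> 'a"
    and fm :: "nat \<Rightarrow> 'a \<Rightarrow> real"
  assumes cvx: "convex_on UNIV f"
    and grad: "\<forall>y. (f has_derivative (\<lambda>h. inner (grad y) h)) (at y)"
    and lip: "\<forall>u v. norm (grad u - grad v) \<le> L * norm (u - v)"
    and Xne: "{y. f y = Inf (range f)} \<noteq> {}"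
    and subg: "\<forall>y. g y \<in> subdiff f y"
    and beta: "0 < \<beta>" "\<beta> < 1"
    and rho: "\<rho> > 0"
    and run: "is_pbm_run f g \<beta> \<rho> x z fm"
    and Dbdd: "bdd_above (range (\<lambda>k. (infdist (x k) {y. f y = Inf (range f)})\<^sup>2))"
    and Ddef: "D2 = (SUP k. (infdist (x k) {y. f y = Inf (range f)})\<^sup>2)"
    and Dpos: "D2 > 0"
    and eps: "0 < \<epsilon>" "\<epsilon> \<le> f (x 0) - Inf (range f)"
  shows "let N = 2 * \<rho> * D2 / (\<beta> * \<epsilon>)
                 + real_of_int (ceil_plus (2 * ln ((f (x 0) - Inf (range f)) / (\<rho> * D2)) / \<beta>));
             Desc = {k. f (x k) - Inf (range f) > \<epsilon> \<and> pbm_descent f \<beta> x z fm k};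
             Null = {k. f (x k) - Inf (range f) > \<epsilon> \<and> \<not> pbm_descent f \<beta> x z fm k}
         in finite Desc \<and> real (card Desc) \<le> N \<and>
            finite Null \<and> real (card Null) \<le> 16 * (L + \<rho>)^3 / ((1 - \<beta>)^2 * \<rho>^3) * (N + 1)"
proof -
  interpret proximal_bundle f grad g L \<beta> \<rho> x z fm
    using cvx grad lip subg beta rho run by unfold_locales
  interpret proximal_bundle_bounded f grad g L \<beta> \<rho> x z fm D2
    using exists_near_minimizer[OF Xne Dbdd] Ddef Dpos by unfold_locales auto
  define N where "N = 2 * \<rho> * D2 / (\<beta> * \<epsilon>)
    + real_of_int (ceil_plus (2 * ln ((f (x 0) - Inf (range f)) / (\<rho> * D2)) / \<beta>))"
  obtain p where p: "f p = Inf (range f)" using Xne by auto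
  have D: "finite (descents \<epsilon>) \<and> real (card (descents \<epsilon>)) \<le> N"
    using card_descents_le[OF eps] unfolding N_def .
  then have "finite (nulls \<epsilon>) \<and> real (card (nulls \<epsilon>))
      \<le> (real (card (descents \<epsilon>)) + 1) * (4 * L * (\<rho> + 4 * L) / ((1 - \<beta>) * \<rho>\<^sup>2))"
    using card_nulls_le[OF _ _ p] eps by simp
  moreover have "(real (card (descents \<epsilon>)) + 1) * (4 * L * (\<rho> + 4 * L) / ((1 - \<beta>) * \<rho>\<^sup>2))
      \<le> (N + 1) * (16 * (L + \<rho>)^3 / ((1 - \<beta>)^2 * \<rho>^3))"
    using D null_run_bound_le[OF L_nonneg rho beta] L_nonneg rho beta by (intro mult_mono) auto
  ultimately show ?thesis
    using D unfolding Let_def N_def descents_def nulls_def by (simp add: mult.commute)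
qed

end
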